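(* A normal mode transformation exists if and only if $\bm{\Omega}$ is positive definite.
   Context: Fix an integer $N\ge 1$, real numbers $v$ with $|v|<1$, $L>0$, $L_{\star}\ge 0$, an integer $M\ge 1$ and real coefficients $c_{1}=1,c_{2},\dots,c_{M}$. Let $F(k)=\sum_{i=1}^{M}(-1)^{i-1}c_{i}L_{\star}^{2i-2}k^{2i-1}$ and $k_{n}=n\pi/L$, and assume $F(k_{n})^{2}\neq v^{2}k_{n}^{2}$ for $n=1,\dots,N$. Put $u_{n}=\sqrt{|F(k_{n})^{2}-v^{2}k_{n}^{2}|}/k_{n}>0$, and $\varepsilon_{n}=1$ if $F(k_{n})^{2}-v^{2}k_{n}^{2}>0$, $\varepsilon_{n}=0$ otherwise. Define $N\times N$ matrices $\bm\sigma,\bm\rho,\bm\xi$ by $\sigma_{nn}=0$, $\sigma_{nm}=\dfrac{2iv\sqrt{nm}\,[1-(-1)^{n+m}]}{\pi\sqrt{u_{n}u_{m}}\,(m^{2}-n^{2})}$ for $n\neq m$, $\bm\rho=\mathrm{diag}(n u_{n}\varepsilon_{n})$, $\bm\xi=\mathrm{diag}(-n u_{n}(1-\varepsilon_{n}))$. With $\mathbf{I}$ the $N\times N$ identity, define the $2N\times 2N$ matrices $\bm{\Sigma}=\begin{pmatrix}\mathbf{I}&\mathbf{0}\\ \mathbf{0}&-\mathbf{I}\end{pmatrix}$, $\bm{\Gamma}=\begin{pmatrix}\mathbf{0}&\mathbf{I}\\ \mathbf{I}&\mathbf{0}\end{pmatrix}$, $\mathbf{R}=\bm{\Sigma}-\begin{pmatrix}\bm\sigma&\bm\sigma\\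 \bm\sigma&\bm\sigma\end{pmatrix}$, $\bm{\Omega}=\begin{pmatrix}\bm\rho&\bm\xi\\ \bm\xi&\bm\rho\end{pmatrix}$. Standing assumption: $\mathbf{R}$ is invertible. Let $\mathbf{D}=\mathbf{R}^{-1}\bm{\Omega}$. Here ${}^{*}$ denotes entrywise complex conjugation and ${}^{\mathrm{H}}$ the conjugate transpose. A normal mode transformation is a $2N\times2N$ matrix $\mathbf{T}$ such that (i) $\mathbf{T}^{\mathrm{H}}\mathbf{R}\mathbf{T}=\bm{\Sigma}$; (ii) $\mathbf{T}=\bm{\Gamma}\mathbf{T}^{*}\bm{\Gamma}$; (iii) $\mathbf{T}^{-1}\mathbf{D}\mathbf{T}=\mathrm{diag}(\mu_{1},\dots,\mu_{N},-\mu_{1},\dots,-\mu_{N})$ for some real numbers $\mu_{n}>0$, where $\mathbf{T}^{-1}=\bm{\Sigma}\mathbf{T}^{\mathrm{H}}\mathbf{R}$. *)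

theory Defs
  imports Complex_Main "Jordan_Normal_Form.Matrix"
begin

definition dispF :: "real \<Rightarrow> nat \<Rightarrow> (nat \<Rightarrow> real) \<Rightarrow> real \<Rightarrow> real" where
  "dispF Ls M c k = (\<Sum>i=1..M. (-1)^(i-1) * c i * Ls^(2*i-2) * k^(2*i-1))"

definition wavenum :: "real \<Rightarrow> nat \<Rightarrow> real" where
  "wavenum L n = real n * pi / L"

definition discr :: "real \<Rightarrow> real \<Rightarrow> real \<Rightarrow> nat \<Rightarrow> (nat \<Rightarrow> real) \<Rightarrow> nat \<Rightarrow> real" where
  "discr v L Ls M c n = (dispF Ls M c (wavenum L n))^2 - v^2 * (wavenum L n)^2"

definition uu :: "real \<Rightarrow> real \<Rightarrow> real \<Rightarrow> nat \<Rightarrow> (nat \<Rightarrow> real) \<Rightarrow> nat \<Rightarrow> real" where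
  "uu v L Ls M c n = sqrt \<bar>discr v L Ls M c n\<bar> / wavenum L n"

definition epsn :: "real \<Rightarrow> real \<Rightarrow> real \<Rightarrow> nat \<Rightarrow> (nat \<Rightarrow> real) \<Rightarrow> nat \<Rightarrow> real" where
  "epsn v L Ls M c n = (if discr v L Ls M c n > 0 then 1 else 0)"

text \<open>N x N matrices, 0-based indices i,j correspond to n = i+1, m = j+1.\<close>
definition sigmaM :: "nat \<Rightarrow> real \<Rightarrow> real \<Rightarrow> real \<Rightarrow> nat \<Rightarrow> (nat \<Rightarrow> real) \<Rightarrow> complex mat" where
  "sigmaM N v L Ls M c = mat N N (\<lambda>(i,j). let n = i+1; m = j+1 in
     if n = m then 0 else
     \<i> * complex_of_real (2 * v * sqrt (real (n*m)) * (1 - (-1)^(n+m))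
        / (pi * sqrt (uu v L Ls M c n * uu v L Ls M c m) * (real m ^ 2 - real n ^ 2))))"

definition rhoM :: "nat \<Rightarrow> real \<Rightarrow> real \<Rightarrow> real \<Rightarrow> nat \<Rightarrow> (nat \<Rightarrow> real) \<Rightarrow> real mat" where
  "rhoM N v L Ls M c = mat N N (\<lambda>(i,j). if i = j then
     real (i+1) * uu v L Ls M c (i+1) * epsn v L Ls M c (i+1) else 0)"

definition xiM :: "nat \<Rightarrow> real \<Rightarrow> real \<Rightarrow> real \<Rightarrow> nat \<Rightarrow> (nat \<Rightarrow> real) \<Rightarrow> real mat" where
  "xiM N v L Ls M c = mat N N (\<lambda>(i,j). if i = j then
     - real (i+1) * uu v L Ls M c (i+1) * (1 - epsn v L Ls M c (i+1)) else 0)"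

definition SigmaM :: "nat \<Rightarrow> complex mat" where
  "SigmaM N = four_block_mat (1\<^sub>m N) (0\<^sub>m N N) (0\<^sub>m N N) (- 1\<^sub>m N)"

definition GammaM :: "nat \<Rightarrow> complex mat" where
  "GammaM N = four_block_mat (0\<^sub>m N N) (1\<^sub>m N) (1\<^sub>m N) (0\<^sub>m N N)"

definition RM :: "nat \<Rightarrow> real \<Rightarrow> real \<Rightarrow> real \<Rightarrow> nat \<Rightarrow> (nat \<Rightarrow> real) \<Rightarrow> complex mat" where
  "RM N v L Ls M c = SigmaM N -
     four_block_mat (sigmaM N v L Ls M c) (sigmaM N v L Ls M c)
                    (sigmaM N v L Ls M c) (sigmaM N v L Ls M c)"

definition OmegaM :: "nat \<Rightarrow> real \<Rightarrow> real \<Rightarrow> real \<Rightarrow> nat \<Rightarrow> (nat \<Rightarrow> real) \<Rightarrow> real mat" where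
  "OmegaM N v L Ls M c = four_block_mat (rhoM N v L Ls M c) (xiM N v L Ls M c)
                                        (xiM N v L Ls M c) (rhoM N v L Ls M c)"

definition inv_mat :: "nat \<Rightarrow> complex mat \<Rightarrow> complex mat" where
  "inv_mat n A = (THE B. B \<in> carrier_mat n n \<and> A * B = 1\<^sub>m n \<and> B * A = 1\<^sub>m n)"

definition DM :: "nat \<Rightarrow> real \<Rightarrow> real \<Rightarrow> real \<Rightarrow> nat \<Rightarrow> (nat \<Rightarrow> real) \<Rightarrow> complex mat" where
  "DM N v L Ls M c = inv_mat (2*N) (RM N v L Ls M c) * map_mat complex_of_real (OmegaM N v L Ls M c)"

definition cconj :: "complex mat \<Rightarrow> complex mat" where
  "cconj A = map_mat cnj A"

definition adj :: "complex mat \<Rightarrow> complex mat" where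
  "adj A = transpose_mat (cconj A)"

definition normal_mode_transformation ::
  "nat \<Rightarrow> real \<Rightarrow> real \<Rightarrow> real \<Rightarrow> nat \<Rightarrow> (nat \<Rightarrow> real) \<Rightarrow> complex mat \<Rightarrow> bool" where
  "normal_mode_transformation N v L Ls M c T \<longleftrightarrow>
     (let R = RM N v L Ls M c; Tinv = SigmaM N * adj T * R in
     T \<in> carrier_mat (2*N) (2*N) \<and>
     adj T * R * T = SigmaM N \<and>
     T = GammaM N * cconj T * GammaM N \<and>
     (\<exists>\<mu> :: nat \<Rightarrow> real. (\<forall>i<N. \<mu> i > 0) \<and>
        Tinv * DM N v L Ls M c * T =
        mat_diag (2*N) (\<lambda>i. complex_of_real (if i < N then \<mu> i else - \<mu> (i - N)))))"

definition pos_def_mat :: "nat \<Rightarrow> real mat \<Rightarrow> bool" where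
  "pos_def_mat n A \<longleftrightarrow> A \<in> carrier_mat n n \<and> transpose_mat A = A \<and>
     (\<forall>x \<in> carrier_vec n. x \<noteq> 0\<^sub>v n \<longrightarrow> x \<bullet> (A *\<^sub>v x) > 0)"

end

theory Submission
  imports Defs "Jordan_Normal_Form.Schur_Decomposition"
    "HOL-Computational_Algebra.Fundamental_Theorem_Algebra"
begin

lemma dim_adj [simp]: "dim_row (adj A) = dim_col A" "dim_col (adj A) = dim_row A"
  unfolding adj_def cconj_def by auto

lemma adj_carrier_mat [simp]: "A \<in> carrier_mat n m \<Longrightarrow> adj A \<in> carrier_mat m n"
  unfolding adj_def cconj_def by auto

lemma index_adj [simp]: "i < dim_col A \<Longrightarrow> j < dim_row A \<Longrightarrow> adj A $$ (i, j) = cnj (A $$ (j, i))"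
  unfolding adj_def cconj_def by auto

lemma adj_adj [simp]: "adj (adj A) = A"
  by (rule eq_matI) auto

lemma adj_one_mat [simp]: "adj (1\<^sub>m n) = 1\<^sub>m n"
  by (rule eq_matI) auto

lemma adj_zero_mat [simp]: "adj (0\<^sub>m n m) = 0\<^sub>m m n"
  by (rule eq_matI) auto

lemma mult_carrier_mat_square [simp]:
  "A \<in> carrier_mat n n \<Longrightarrow> B \<in> carrier_mat n n \<Longrightarrow> A * B \<in> carrier_mat n n"
  by (rule mult_carrier_mat)

lemma cconj_carrier_mat [simp]: "A \<in> carrier_mat n m \<Longrightarrow> cconj A \<in> carrier_mat n m"
  unfolding cconj_def by simp

lemma adj_mult:
  assumes "A \<in> carrier_mat n k" "B \<in> carrier_mat k m"
  shows "adj (A * B) = adj B * adj A"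
  by (rule eq_matI) (use assms in \<open>auto simp: scalar_prod_def intro!: sum.cong\<close>)

lemma adj_minus:
  assumes "A \<in> carrier_mat n m" "B \<in> carrier_mat n m"
  shows "adj (A - B) = adj A - adj B"
  by (rule eq_matI) (use assms in auto)

lemma adj_four_block_mat:
  assumes "A \<in> carrier_mat nr1 nc1" "B \<in> carrier_mat nr1 nc2"
    "C \<in> carrier_mat nr2 nc1" "D \<in> carrier_mat nr2 nc2"
  shows "adj (four_block_mat A B C D) = four_block_mat (adj A) (adj C) (adj B) (adj D)"
  unfolding adj_def cconj_def
  by (subst map_four_block_mat[OF assms], subst transpose_four_block_mat) (use assms in auto)

lemma adj_mult_congruence:
  assumes "A \<in> carrier_mat n n" "B \<in> carrier_mat n n" "C \<in> carrier_mat n n"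
  shows "adj (A * B) * C * (A * B) = adj B * (adj A * C * A) * B"
  using assms
  by (simp add: adj_mult[of _ n n _ n] assoc_mult_mat[of _ n n _ n _ n] mult_carrier_mat[of _ n n])

lemma cnj_inner:
  fixes x y :: "complex vec"
  assumes "x \<in> carrier_vec n" "y \<in> carrier_vec n"
  shows "cnj (conjugate x \<bullet> y) = conjugate y \<bullet> x"
  using conjugate_conjugate_sprod[OF assms] comm_scalar_prod[of x n "conjugate y"] assms by simp

lemma inner_adj:
  assumes A: "A \<in> carrier_mat n m" and x: "x \<in> carrier_vec m" and y: "y \<in> carrier_vec n"
  shows "conjugate (A *\<^sub>v x) \<bullet> y = conjugate x \<bullet> (adj A *\<^sub>v y)"
proof -
  have "conjugate (A *\<^sub>v x) \<bullet> y = (\<Sum>i<n. \<Sum>j<m. cnj (A $$ (i, j)) * cnj (x $ j) * y $ i)"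
    using A x y by (simp add: scalar_prod_def sum_distrib_right atLeast0LessThan)
  also have "\<dots> = (\<Sum>j<m. \<Sum>i<n. cnj (A $$ (i, j)) * cnj (x $ j) * y $ i)"
    by (rule sum.swap)
  also have "\<dots> = conjugate x \<bullet> (adj A *\<^sub>v y)"
    using A x y by (simp add: scalar_prod_def sum_distrib_left atLeast0LessThan ac_simps)
  finally show ?thesis .
qed

lemma inv_mat_inverse:
  assumes A: "A \<in> carrier_mat n n" and inv: "invertible_mat A"
  shows "inv_mat n A \<in> carrier_mat n n" "A * inv_mat n A = 1\<^sub>m n" "inv_mat n A * A = 1\<^sub>m n"
proof -
  from inv obtain B where "inverts_mat A B" "inverts_mat B A"
    unfolding invertible_mat_def by blast
  then have AB: "A * B = 1\<^sub>m n" and BA: "B * A = 1\<^sub>m (dim_row B)"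
    using A unfolding inverts_mat_def by simp_all
  have B: "B \<in> carrier_mat n n"
  proof (rule carrier_matI)
    show "dim_row B = n" using arg_cong[OF BA, of dim_col] A by simp
    show "dim_col B = n" using arg_cong[OF AB, of dim_col] by simp
  qed
  have BA': "B * A = 1\<^sub>m n" by (rule mat_mult_left_right_inverse[OF A B AB])
  have "inv_mat n A = B"
    unfolding inv_mat_def
  proof (rule the_equality)
    fix C assume "C \<in> carrier_mat n n \<and> A * C = 1\<^sub>m n \<and> C * A = 1\<^sub>m n"
    then have C: "C \<in> carrier_mat n n" "C * A = 1\<^sub>m n" by simp_all
    have "C = C * (A * B)" using C AB by simp
    also have "\<dots> = (C * A) * B" by (rule assoc_mult_mat[symmetric]) (use C A B in auto)
    also have "\<dots> = B" using C B by simp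
    finally show "C = B" .
  qed (use B AB BA' in blast)
  with B AB BA' show "inv_mat n A \<in> carrier_mat n n" "A * inv_mat n A = 1\<^sub>m n" "inv_mat n A * A = 1\<^sub>m n"
    by simp_all
qed

lemma invertible_mat_mult:
  fixes A B :: "complex mat"
  assumes A: "A \<in> carrier_mat n n" and B: "B \<in> carrier_mat n n"
    and "invertible_mat A" "invertible_mat B"
  shows "invertible_mat (A * B)"
proof -
  note A' = inv_mat_inverse[OF A \<open>invertible_mat A\<close>]
  note B' = inv_mat_inverse[OF B \<open>invertible_mat B\<close>]
  let ?C = "inv_mat n B * inv_mat n A"
  have "(A * B) * ?C = A * (B * inv_mat n B) * inv_mat n A"
    using A B A'(1) B'(1) by (simp add: assoc_mult_mat[of _ n n _ n _ n])
  also have "\<dots> = 1\<^sub>m n" using A A' B' by simp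
  finally have "(A * B) * ?C = 1\<^sub>m n" .
  moreover have "?C * (A * B) = 1\<^sub>m n"
    using mat_mult_left_right_inverse[OF mult_carrier_mat[OF A B] _ calculation] A'(1) B'(1) by simp
  ultimately show ?thesis
    using A B A'(1) B'(1) unfolding invertible_mat_def inverts_mat_def
    by (intro conjI exI[of _ ?C]) auto
qed

definition sesq_form :: "complex mat \<Rightarrow> complex vec \<Rightarrow> complex vec \<Rightarrow> complex" where
  "sesq_form A x y = conjugate x \<bullet> (A *\<^sub>v y)"

lemma sesq_form_smult_left:
  "A \<in> carrier_mat n n \<Longrightarrow> x \<in> carrier_vec n \<Longrightarrow> y \<in> carrier_vec n \<Longrightarrow>
    sesq_form A (k \<cdot>\<^sub>v x) y = cnj k * sesq_form A x y"
  unfolding sesq_form_def by (simp add: conjugate_smult_vec)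

lemma sesq_form_smult_right:
  "A \<in> carrier_mat n n \<Longrightarrow> x \<in> carrier_vec n \<Longrightarrow> y \<in> carrier_vec n \<Longrightarrow>
    sesq_form A x (k \<cdot>\<^sub>v y) = k * sesq_form A x y"
  unfolding sesq_form_def by (simp add: mult_mat_vec)

lemma sesq_form_smult_mat:
  assumes "A \<in> carrier_mat n n" "x \<in> carrier_vec n" "y \<in> carrier_vec n"
  shows "sesq_form (k \<cdot>\<^sub>m A) x y = k * sesq_form A x y"
proof -
  have "(k \<cdot>\<^sub>m A) *\<^sub>v y = k \<cdot>\<^sub>v (A *\<^sub>v y)" using assms by (intro eq_vecI) auto
  then show ?thesis unfolding sesq_form_def using assms by simp
qed

lemma sesq_form_one_mat:
  "x \<in> carrier_vec n \<Longrightarrow> y \<in> carrier_vec n \<Longrightarrow> sesq_form (1\<^sub>m n) x y = conjugate x \<bullet> y"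
  unfolding sesq_form_def by simp

lemma sesq_form_hermitian:
  assumes A: "A \<in> carrier_mat n n" and herm: "adj A = A"
    and x: "x \<in> carrier_vec n" and y: "y \<in> carrier_vec n"
  shows "sesq_form A x y = cnj (sesq_form A y x)"
proof -
  have "cnj (sesq_form A y x) = conjugate (A *\<^sub>v x) \<bullet> y"
    unfolding sesq_form_def using A x y by (simp add: cnj_inner[of y n])
  also have "\<dots> = sesq_form A x y"
    unfolding sesq_form_def using inner_adj[OF A x y] herm by simp
  finally show ?thesis ..
qed

lemma sesq_form_mult_mat_vec:
  assumes T: "T \<in> carrier_mat n n" and A: "A \<in> carrier_mat n n"
    and x: "x \<in> carrier_vec n" and y: "y \<in> carrier_vec n"
  shows "sesq_form A (T *\<^sub>v x) (T *\<^sub>v y) = sesq_form (adj T * A * T) x y"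
  unfolding sesq_form_def using T A x y
  by (simp add: inner_adj[OF T x, of "A *\<^sub>v (T *\<^sub>v y)"]
      assoc_mult_mat_vec[of _ n n _ n] assoc_mult_mat[of _ n n _ n _ n])

lemma index_adj_mult_mult:
  assumes "T \<in> carrier_mat n m" "A \<in> carrier_mat n n" "i < m" "j < m"
  shows "(adj T * A * T) $$ (i, j) = sesq_form A (col T i) (col T j)"
  using assms unfolding sesq_form_def
  by (simp add: assoc_mult_mat[of "adj T" m n A n T m] col_mult2 conjugate_vec_def)
     (auto simp: scalar_prod_def intro!: sum.cong)

lemma mat_diag_mult_vec:
  assumes y: "y \<in> carrier_vec n"
  shows "mat_diag n f *\<^sub>v y = vec n (\<lambda>i. f i * y $ i)"
proof (rule eq_vecI)
  fix i assume "i < dim_vec (vec n (\<lambda>i. f i * y $ i))"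
  then have i: "i < n" by simp
  have "(mat_diag n f *\<^sub>v y) $ i = (\<Sum>j = 0..<n. (if i = j then f j else 0) * y $ j)"
    using i y by (simp add: mat_diag_def scalar_prod_def)
  also have "\<dots> = (\<Sum>j = 0..<n. if j = i then f j * y $ j else 0)"
    by (rule sum.cong) auto
  finally show "(mat_diag n f *\<^sub>v y) $ i = vec n (\<lambda>i. f i * y $ i) $ i"
    using i by simp
qed (simp add: mat_diag_def)

lemma sesq_form_mat_diag:
  assumes y: "y \<in> carrier_vec n"
  shows "sesq_form (mat_diag n (\<lambda>i. complex_of_real (d i))) y y
    = complex_of_real (\<Sum>i<n. d i * (cmod (y $ i))\<^sup>2)"
proof -
  have "sesq_form (mat_diag n (\<lambda>i. complex_of_real (d i))) y y
      = (\<Sum>i<n. cnj (y $ i) * (complex_of_real (d i) * y $ i))"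
    unfolding sesq_form_def mat_diag_mult_vec[OF y] using y by (simp add: scalar_prod_def atLeast0LessThan)
  also have "\<dots> = (\<Sum>i<n. complex_of_real (d i * (cmod (y $ i))\<^sup>2))"
  proof (intro sum.cong refl)
    have "(complex_of_real (cmod z))\<^sup>2 = cnj z * z" for z
      using complex_norm_square[of z] by (simp add: mult.commute)
    then show "cnj (y $ i) * (complex_of_real (d i) * y $ i) = complex_of_real (d i * (cmod (y $ i))\<^sup>2)" for i
      by (simp add: mult_ac)
  qed
  finally show ?thesis by (simp only: of_real_sum)
qed

lemma sesq_form_pos_if_congruent_pos_diag:
  assumes A: "A \<in> carrier_mat n n" and T: "T \<in> carrier_mat n n"
    and Ti: "Ti \<in> carrier_mat n n" "Ti * T = 1\<^sub>m n"
    and diag: "adj T * A * T = mat_diag n (\<lambda>i. complex_of_real (d i))" and d: "\<forall>i<n. d i > 0"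
    and x: "x \<in> carrier_vec n" "x \<noteq> 0\<^sub>v n"
  shows "Re (sesq_form A x x) > 0"
proof -
  define y where "y = Ti *\<^sub>v x"
  have y: "y \<in> carrier_vec n" unfolding y_def using Ti x by simp
  have "T *\<^sub>v y = (T * Ti) *\<^sub>v x" unfolding y_def using T Ti x by simp
  also have "T * Ti = 1\<^sub>m n" by (rule mat_mult_left_right_inverse[OF Ti(1) T Ti(2)])
  finally have Ty: "T *\<^sub>v y = x" using x by simp
  have "y \<noteq> 0\<^sub>v n"
  proof
    assume "y = 0\<^sub>v n"
    then have "x = T *\<^sub>v 0\<^sub>v n" using Ty by simp
    also have "\<dots> = 0\<^sub>v n" using T by (intro eq_vecI) auto
    finally show False using x(2) by simp
  qed
  then obtain k where k: "k < n" and yk: "y $ k \<noteq> 0" using y by (auto simp: vec_eq_iff)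
  have "sesq_form A x x = complex_of_real (\<Sum>i<n. d i * (cmod (y $ i))\<^sup>2)"
    using sesq_form_mult_mat_vec[OF T A y y] sesq_form_mat_diag[OF y] unfolding Ty diag by simp
  moreover have "0 < (\<Sum>i<n. d i * (cmod (y $ i))\<^sup>2)"
    using d k yk by (intro sum_pos2[of _ k]) auto
  ultimately show ?thesis by simp
qed

definition unitary_mat :: "nat \<Rightarrow> complex mat \<Rightarrow> bool" where
  "unitary_mat n U \<longleftrightarrow> U \<in> carrier_mat n n \<and> adj U * U = 1\<^sub>m n"

lemma index_adj_mult_self:
  "U \<in> carrier_mat n m \<Longrightarrow> i < m \<Longrightarrow> j < m \<Longrightarrow> (adj U * U) $$ (i, j) = conjugate (col U i) \<bullet> col U j"
  by (auto simp: scalar_prod_def intro!: sum.cong)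

lemma unitary_mat_orthonormal_cols:
  assumes "unitary_mat n U" "i < n" "j < n"
  shows "conjugate (col U i) \<bullet> col U j = (if i = j then 1 else 0)"
  using assms index_adj_mult_self[of U n n i j] unfolding unitary_mat_def by simp

lemma unitary_mat_mult:
  assumes U: "unitary_mat n U" and V: "unitary_mat n V"
  shows "unitary_mat n (U * V)"
proof -
  have U': "U \<in> carrier_mat n n" "adj U * U = 1\<^sub>m n" and V': "V \<in> carrier_mat n n" "adj V * V = 1\<^sub>m n"
    using U V unfolding unitary_mat_def by auto
  have "adj U * (U * V) = (adj U * U) * V" by (rule assoc_mult_mat[symmetric]) (use U' V' in auto)
  then have "adj U * (U * V) = V" using U' V' by simp
  then have "adj (U * V) * (U * V) = adj V * V"
    using U' V' by (simp add: adj_mult[of _ n n _ n] assoc_mult_mat[of _ n n _ n _ n] mult_carrier_mat[of _ n n])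
  then show ?thesis using U' V' unfolding unitary_mat_def by simp
qed

lemma four_block_diag_mult:
  fixes A1 A2 D1 D2 :: "'a :: comm_ring_1 mat"
  assumes "A1 \<in> carrier_mat a a" "D1 \<in> carrier_mat b b" "A2 \<in> carrier_mat a a" "D2 \<in> carrier_mat b b"
  shows "four_block_mat A1 (0\<^sub>m a b) (0\<^sub>m b a) D1 * four_block_mat A2 (0\<^sub>m a b) (0\<^sub>m b a) D2
    = four_block_mat (A1 * A2) (0\<^sub>m a b) (0\<^sub>m b a) (D1 * D2)"
  by (subst mult_four_block_mat[OF assms(1) zero_carrier_mat zero_carrier_mat assms(2)
        assms(3) zero_carrier_mat zero_carrier_mat assms(4)])
     (use assms in \<open>auto intro!: cong_four_block_mat\<close>)

lemma unitary_mat_one_block: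
  assumes U: "unitary_mat m U"
  defines "V \<equiv> four_block_mat (1\<^sub>m 1) (0\<^sub>m 1 m) (0\<^sub>m m 1) U"
  shows "unitary_mat (Suc m) V"
    and "D \<in> carrier_mat 1 1 \<Longrightarrow> B \<in> carrier_mat m m \<Longrightarrow>
      adj V * four_block_mat D (0\<^sub>m 1 m) (0\<^sub>m m 1) B * V = four_block_mat D (0\<^sub>m 1 m) (0\<^sub>m m 1) (adj U * B * U)"
proof -
  have U': "U \<in> carrier_mat m m" "adj U * U = 1\<^sub>m m" using U unfolding unitary_mat_def by auto
  have adjV: "adj V = four_block_mat (1\<^sub>m 1) (0\<^sub>m 1 m) (0\<^sub>m m 1) (adj U)"
    unfolding V_def using U' by (simp add: adj_four_block_mat[of _ 1 1 _ m _ m])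
  have "adj V * V = four_block_mat (1\<^sub>m 1 * 1\<^sub>m 1) (0\<^sub>m 1 m) (0\<^sub>m m 1) (adj U * U)"
    unfolding adjV by (unfold V_def, rule four_block_diag_mult) (use U' in auto)
  also have "\<dots> = 1\<^sub>m (Suc m)" unfolding U'(2) by (rule eq_matI) auto
  moreover have "V \<in> carrier_mat (Suc m) (Suc m)" using U' unfolding V_def carrier_mat_def by simp
  ultimately show "unitary_mat (Suc m) V" unfolding unitary_mat_def by simp
  assume D: "D \<in> carrier_mat 1 1" and B: "B \<in> carrier_mat m m"
  have "adj V * four_block_mat D (0\<^sub>m 1 m) (0\<^sub>m m 1) B = four_block_mat (1\<^sub>m 1 * D) (0\<^sub>m 1 m) (0\<^sub>m m 1) (adj U * B)"
    unfolding adjV by (rule four_block_diag_mult) (use U' D B in auto)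
  moreover have "four_block_mat (1\<^sub>m 1 * D) (0\<^sub>m 1 m) (0\<^sub>m m 1) (adj U * B) * V
      = four_block_mat (1\<^sub>m 1 * D * 1\<^sub>m 1) (0\<^sub>m 1 m) (0\<^sub>m m 1) (adj U * B * U)"
    unfolding V_def by (rule four_block_diag_mult) (use U' D B in auto)
  ultimately show "adj V * four_block_mat D (0\<^sub>m 1 m) (0\<^sub>m m 1) B * V = four_block_mat D (0\<^sub>m 1 m) (0\<^sub>m m 1) (adj U * B * U)"
    using D by simp
qed

lemma unit_normalization:
  fixes v :: "complex vec"
  assumes v: "v \<in> carrier_vec n" and v0: "v \<noteq> 0\<^sub>v n"
  defines "r \<equiv> sqrt (Re (v \<bullet>c v))"
  shows "r > 0" and "(complex_of_real (1 / r) \<cdot>\<^sub>v v) \<bullet>c (complex_of_real (1 / r) \<cdot>\<^sub>v v) = 1"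
proof -
  have pos: "0 < v \<bullet>c v" using v v0 by simp
  then show r: "r > 0" unfolding r_def by (simp add: less_complex_def)
  have "v \<bullet>c v = complex_of_real (r * r)"
    using pos unfolding r_def by (simp add: less_complex_def complex_eq_iff)
  then show "(complex_of_real (1 / r) \<cdot>\<^sub>v v) \<bullet>c (complex_of_real (1 / r) \<cdot>\<^sub>v v) = 1"
    using v r by (simp add: conjugate_smult_vec)
qed

lemma unit_vec_extends_to_unitary:
  fixes v :: "complex vec"
  assumes v: "v \<in> carrier_vec n" and v1: "v \<bullet>c v = 1"
  shows "\<exists>U. unitary_mat n U \<and> col U 0 = v"
proof -
  interpret cof_vec_space n "TYPE(complex)" .
  have v0: "v \<noteq> 0\<^sub>v n" using v1 by auto
  then have n: "0 < n" using v by (cases n) auto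
  note b = basis_completion[OF v v0]
  define ws where "ws = gram_schmidt n (basis_completion v)"
  have ws: "set ws \<subseteq> carrier_vec n" "corthogonal ws" "length ws = n"
    using gram_schmidt_result[OF b(2,4,5) ws_def] b(6) by auto
  have ws0: "ws ! 0 = v"
  proof -
    obtain vs where "basis_completion v = v # vs" using b(6,7) n by (cases "basis_completion v") auto
    then show ?thesis using v ws(3) n unfolding ws_def by (metis gram_schmidt_hd hd_conv_nth list.size(3) neq0_conv)
  qed
  have wsj: "ws ! j \<in> carrier_vec n" "ws ! j \<noteq> 0\<^sub>v n" if "j < n" for j
  proof -
    show wsj: "ws ! j \<in> carrier_vec n" using ws that by auto
    have "ws ! j \<bullet>c ws ! j \<noteq> 0" using ws that unfolding corthogonal_def by auto
    then show "ws ! j \<noteq> 0\<^sub>v n" using wsj by auto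
  qed
  define r where "r j = sqrt (Re (ws ! j \<bullet>c ws ! j))" for j
  define U where "U = mat n n (\<lambda>(i, j). ws ! j $ i / complex_of_real (r j))"
  have colU: "col U j = complex_of_real (1 / r j) \<cdot>\<^sub>v ws ! j" if "j < n" for j
    using wsj[OF that] that unfolding U_def by (auto simp: col_def)
  have "adj U * U = 1\<^sub>m n"
  proof (rule eq_matI)
    fix i j assume "i < dim_row (1\<^sub>m n :: complex mat)" "j < dim_col (1\<^sub>m n :: complex mat)"
    then have i: "i < n" and j: "j < n" by auto
    have "(adj U * U) $$ (i, j) = col U j \<bullet>c col U i"
      using index_adj_mult_self[of U n n i j] i j
      by (simp add: U_def conjugate_vec_sprod_comm[of _ n])
    also have "\<dots> = 1\<^sub>m n $$ (i, j)"
    proof (cases "i = j")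
      case True
      then show ?thesis using unit_normalization(2)[OF wsj[OF j]] colU[OF j] i unfolding r_def by simp
    next
      case False
      then have "ws ! j \<bullet>c ws ! i = 0" using ws i j unfolding corthogonal_def by auto
      then show ?thesis using False i j colU[OF i] colU[OF j] wsj[OF i] wsj[OF j] by (simp add: conjugate_smult_vec)
    qed
    finally show "(adj U * U) $$ (i, j) = 1\<^sub>m n $$ (i, j)" .
  qed (auto simp: U_def)
  moreover have "col U 0 = v"
    using colU[OF n] ws0 v1 unfolding r_def by simp
  ultimately show ?thesis unfolding unitary_mat_def by (intro exI[of _ U]) (simp add: U_def)
qed

lemma hermitian_unit_eigenvector:
  assumes A: "A \<in> carrier_mat n n" and herm: "adj A = A" and n: "0 < n"
  obtains e :: real and w where "w \<in> carrier_vec n" "w \<bullet>c w = 1" "A *\<^sub>v w = complex_of_real e \<cdot>\<^sub>v w"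
proof -
  have "degree (char_poly A) = n" using degree_monic_char_poly[OF A] by simp
  then have "\<not> constant (poly (char_poly A))" using n by (simp add: constant_degree)
  then obtain e where "poly (char_poly A) e = 0" using fundamental_theorem_of_algebra by blast
  then obtain v where "eigenvector A v e" using eigenvalue_root_char_poly[OF A] unfolding eigenvalue_def by blast
  then have v: "v \<in> carrier_vec n" "v \<noteq> 0\<^sub>v n" and Av: "A *\<^sub>v v = e \<cdot>\<^sub>v v"
    unfolding eigenvector_def using A by auto
  define w where "w = complex_of_real (1 / sqrt (Re (v \<bullet>c v))) \<cdot>\<^sub>v v"
  have w: "w \<in> carrier_vec n" "w \<bullet>c w = 1"
    using v unit_normalization(2)[OF v] unfolding w_def by auto
  have Aw: "A *\<^sub>v w = e \<cdot>\<^sub>v w"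
    unfolding w_def using A v Av by (simp add: mult_mat_vec smult_smult_assoc mult.commute)
  have "sesq_form A w w = e"
    unfolding sesq_form_def Aw using w by (simp add: conjugate_vec_sprod_comm[symmetric])
  then have "cnj e = e" using sesq_form_hermitian[OF A herm w(1) w(1)] by simp
  then have "e = complex_of_real (Re e)" by (simp add: complex_eq_iff)
  then show ?thesis using that w Aw by metis
qed

lemma hermitian_deflation:
  assumes A: "A \<in> carrier_mat (Suc m) (Suc m)" and herm: "adj A = A"
    and U: "unitary_mat (Suc m) U" and eig: "A *\<^sub>v col U 0 = complex_of_real e \<cdot>\<^sub>v col U 0"
  obtains B where "B \<in> carrier_mat m m" "adj B = B"
    "adj U * A * U = four_block_mat (mat_diag 1 (\<lambda>_. complex_of_real e)) (0\<^sub>m 1 m) (0\<^sub>m m 1) B"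
proof -
  have U': "U \<in> carrier_mat (Suc m) (Suc m)" using U unfolding unitary_mat_def by simp
  define C where "C = adj U * A * U"
  have C: "C \<in> carrier_mat (Suc m) (Suc m)" unfolding C_def using A U' by (metis adj_carrier_mat mult_carrier_mat)
  have hermC: "C $$ (i, j) = cnj (C $$ (j, i))" if "i < Suc m" "j < Suc m" for i j
  proof -
    have "adj C = C"
      unfolding C_def using A U' herm
      by (simp add: adj_mult[of _ "Suc m" "Suc m" _ "Suc m"] assoc_mult_mat[of _ "Suc m" "Suc m" _ "Suc m" _ "Suc m"])
    then have "C $$ (i, j) = adj C $$ (i, j)" by simp
    then show ?thesis using C that by simp
  qed
  have col0: "C $$ (i, 0) = (if i = 0 then complex_of_real e else 0)" if "i < Suc m" for i
  proof -
    have "C $$ (i, 0) = conjugate (col U i) \<bullet> (complex_of_real e \<cdot>\<^sub>v col U 0)"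
      unfolding C_def index_adj_mult_mult[OF U' A that zero_less_Suc] sesq_form_def eig ..
    then show ?thesis using unitary_mat_orthonormal_cols[OF U that zero_less_Suc] U' that by simp
  qed
  have row0: "C $$ (0, j) = (if j = 0 then complex_of_real e else 0)" if "j < Suc m" for j
  proof -
    have "C $$ (0, j) = cnj (C $$ (j, 0))" by (rule hermC) (use that in auto)
    then show ?thesis using col0[OF that] by simp
  qed
  define B where "B = mat m m (\<lambda>(i, j). C $$ (Suc i, Suc j))"
  have "adj B = B"
  proof (rule eq_matI)
    fix i j assume "i < dim_row B" "j < dim_col B"
    then show "adj B $$ (i, j) = B $$ (i, j)" using hermC[of "Suc i" "Suc j"] by (simp add: B_def)
  qed (simp_all add: B_def)
  moreover have "C = four_block_mat (mat_diag 1 (\<lambda>_. complex_of_real e)) (0\<^sub>m 1 m) (0\<^sub>m m 1) B"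
  proof (rule eq_matI)
    fix i j assume "i < dim_row (four_block_mat (mat_diag 1 (\<lambda>_. complex_of_real e)) (0\<^sub>m 1 m) (0\<^sub>m m 1) B)"
      "j < dim_col (four_block_mat (mat_diag 1 (\<lambda>_. complex_of_real e)) (0\<^sub>m 1 m) (0\<^sub>m m 1) B)"
    then have i: "i < Suc m" and j: "j < Suc m" by (simp_all add: B_def mat_diag_def)
    show "C $$ (i, j) = four_block_mat (mat_diag 1 (\<lambda>_. complex_of_real e)) (0\<^sub>m 1 m) (0\<^sub>m m 1) B $$ (i, j)"
      using i j col0[OF i] row0[OF j] by (cases i; cases j) (auto simp: B_def mat_diag_def)
  qed (use C in \<open>simp_all add: B_def mat_diag_def\<close>)
  ultimately show ?thesis using that[of B] unfolding C_def by (simp add: B_def)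
qed

theorem hermitian_unitary_diagonalization:
  assumes "A \<in> carrier_mat n n" "adj A = A"
  shows "\<exists>U d. unitary_mat n U \<and> adj U * A * U = mat_diag n (\<lambda>i. complex_of_real (d i))"
  using assms
proof (induction n arbitrary: A)
  case 0
  have "unitary_mat 0 (1\<^sub>m 0)" unfolding unitary_mat_def by simp
  moreover have "adj (1\<^sub>m 0) * A * 1\<^sub>m 0 = mat_diag 0 (\<lambda>i. complex_of_real 0)"
    using 0 by (intro eq_matI) (auto simp: mat_diag_def)
  ultimately show ?case by (intro exI[of _ "1\<^sub>m 0"] exI[of _ "\<lambda>_. 0"]) simp
next
  case (Suc m)
  obtain e w where w: "w \<in> carrier_vec (Suc m)" "w \<bullet>c w = 1" and Aw: "A *\<^sub>v w = complex_of_real e \<cdot>\<^sub>v w"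
    using hermitian_unit_eigenvector[OF Suc.prems] by blast
  obtain U0 where U0: "unitary_mat (Suc m) U0" "col U0 0 = w"
    using unit_vec_extends_to_unitary[OF w] by blast
  obtain B where B: "B \<in> carrier_mat m m" "adj B = B"
    and AU0: "adj U0 * A * U0 = four_block_mat (mat_diag 1 (\<lambda>_. complex_of_real e)) (0\<^sub>m 1 m) (0\<^sub>m m 1) B"
    using hermitian_deflation[OF Suc.prems U0(1)] Aw U0(2) by metis
  obtain U3 d3 where U3: "unitary_mat m U3" and BU3: "adj U3 * B * U3 = mat_diag m (\<lambda>i. complex_of_real (d3 i))"
    using Suc.IH[OF B] by blast
  define V where "V = four_block_mat (1\<^sub>m 1) (0\<^sub>m 1 m) (0\<^sub>m m 1) U3"
  have U0': "U0 \<in> carrier_mat (Suc m) (Suc m)" and V': "V \<in> carrier_mat (Suc m) (Suc m)"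
    using U0(1) unitary_mat_one_block(1)[OF U3] unfolding unitary_mat_def V_def by auto
  have "adj (U0 * V) * A * (U0 * V) = adj V * (adj U0 * A * U0) * V"
    using adj_mult_congruence[OF U0' V' Suc.prems(1)] .
  also have "\<dots> = four_block_mat (mat_diag 1 (\<lambda>_. complex_of_real e)) (0\<^sub>m 1 m) (0\<^sub>m m 1) (mat_diag m (\<lambda>i. complex_of_real (d3 i)))"
    unfolding AU0 V_def using unitary_mat_one_block(2)[OF U3, of _ B] B BU3 by simp
  also have "\<dots> = mat_diag (Suc m) (\<lambda>i. complex_of_real (if i = 0 then e else d3 (i - 1)))"
    by (rule eq_matI) (auto simp: mat_diag_def)
  moreover have "unitary_mat (Suc m) (U0 * V)"
    using unitary_mat_mult[OF U0(1) unitary_mat_one_block(1)[OF U3]] unfolding V_def .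
  ultimately show ?case
    by (intro exI[of _ "U0 * V"] exI[of _ "\<lambda>i. if i = 0 then e else d3 (i - 1)"]) simp
qed

definition orthonormal_eigenvectors ::
  "complex mat \<Rightarrow> nat \<Rightarrow> (nat \<Rightarrow> complex vec) \<Rightarrow> (nat \<Rightarrow> real) \<Rightarrow> bool" where
  "orthonormal_eigenvectors A m y d \<longleftrightarrow>
     (\<forall>j<m. y j \<in> carrier_vec (dim_col A) \<and> A *\<^sub>v y j = complex_of_real (d j) \<cdot>\<^sub>v y j) \<and>
     (\<forall>j<m. \<forall>l<m. conjugate (y j) \<bullet> y l = (if j = l then 1 else 0))"

lemma hermitian_orthonormal_eigenvectors:
  assumes A: "A \<in> carrier_mat n n" and herm: "adj A = A"
  shows "\<exists>y d. orthonormal_eigenvectors A n y d"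
proof -
  obtain U d where U: "unitary_mat n U" and diag: "adj U * A * U = mat_diag n (\<lambda>i. complex_of_real (d i))"
    using hermitian_unitary_diagonalization[OF A herm] by blast
  have U': "U \<in> carrier_mat n n" "adj U * U = 1\<^sub>m n" using U unfolding unitary_mat_def by auto
  have "U * adj U = 1\<^sub>m n" by (rule mat_mult_left_right_inverse[OF adj_carrier_mat[OF U'(1)] U'(1,2)])
  have "A * U = (U * adj U) * A * U" using A U' \<open>U * adj U = 1\<^sub>m n\<close> by simp
  also have "\<dots> = U * (adj U * A * U)"
    using A U' by (simp add: assoc_mult_mat[of _ n n _ n _ n] mult_carrier_mat[of _ n n])
  finally have AU: "A * U = U * mat_diag n (\<lambda>i. complex_of_real (d i))" unfolding diag .
  have "A *\<^sub>v col U j = complex_of_real (d j) \<cdot>\<^sub>v col U j" if "j < n" for j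
  proof -
    have "A *\<^sub>v col U j = col (U * mat_diag n (\<lambda>i. complex_of_real (d i))) j"
      using AU A U' that by (metis col_mult2)
    also have "\<dots> = complex_of_real (d j) \<cdot>\<^sub>v col U j"
      using U' that by (auto simp: mat_diag_mult_right[OF U'(1)] intro!: eq_vecI)
    finally show ?thesis .
  qed
  then have "orthonormal_eigenvectors A n (col U) d"
    unfolding orthonormal_eigenvectors_def using A U' unitary_mat_orthonormal_cols[OF U] by auto
  then show ?thesis by blast
qed

lemma orthonormal_eigenvectors_reindex:
  assumes "orthonormal_eigenvectors A m y d" "inj_on p {..<k}" "p ` {..<k} \<subseteq> {..<m}"
  shows "orthonormal_eigenvectors A k (y \<circ> p) (d \<circ> p)"
  using assms unfolding orthonormal_eigenvectors_def inj_on_def by (auto simp: subset_iff)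

lemma orthonormal_eigenvectors_nonzero_eigenvalue:
  assumes A: "A \<in> carrier_mat n n" and inv: "invertible_mat A"
    and yd: "orthonormal_eigenvectors A m y d" and j: "j < m"
  shows "d j \<noteq> 0"
proof
  assume d0: "d j = 0"
  have y: "y j \<in> carrier_vec n" and Ay: "A *\<^sub>v y j = complex_of_real (d j) \<cdot>\<^sub>v y j"
    using yd j A unfolding orthonormal_eigenvectors_def by auto
  note Ai = inv_mat_inverse[OF A inv]
  have "y j = (inv_mat n A * A) *\<^sub>v y j" using Ai y by simp
  also have "\<dots> = inv_mat n A *\<^sub>v (A *\<^sub>v y j)" by (rule assoc_mult_mat_vec[OF Ai(1) A y])
  also have "A *\<^sub>v y j = 0\<^sub>v n" using Ay d0 y by (intro eq_vecI) auto
  also have "inv_mat n A *\<^sub>v 0\<^sub>v n = 0\<^sub>v n" using Ai by (intro eq_vecI) auto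
  finally have "conjugate (y j) \<bullet> y j = 0" by simp
  then show False using yd j unfolding orthonormal_eigenvectors_def by auto
qed

lemma hermitian_eigenvectors_orthogonal:
  assumes A: "A \<in> carrier_mat n n" and herm: "adj A = A"
    and x: "x \<in> carrier_vec n" "A *\<^sub>v x = complex_of_real a \<cdot>\<^sub>v x"
    and y: "y \<in> carrier_vec n" "A *\<^sub>v y = complex_of_real b \<cdot>\<^sub>v y"
    and ab: "a \<noteq> b"
  shows "conjugate x \<bullet> y = 0"
proof -
  have "complex_of_real b * (conjugate x \<bullet> y) = sesq_form A x y"
    unfolding sesq_form_def y(2) using x y by simp
  also have "\<dots> = cnj (sesq_form A y x)" by (rule sesq_form_hermitian[OF A herm x(1) y(1)])
  also have "\<dots> = complex_of_real a * (conjugate x \<bullet> y)"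
    unfolding sesq_form_def x(2) using x y by (simp add: cnj_inner[of y n])
  finally have "complex_of_real (b - a) * (conjugate x \<bullet> y) = 0" by (simp add: algebra_simps)
  then show ?thesis using ab by simp
qed

definition swap_half :: "nat \<Rightarrow> nat \<Rightarrow> nat" where
  "swap_half N i = (if i < N then i + N else i - N)"

lemma swap_half_less: "i < 2 * N \<Longrightarrow> swap_half N i < 2 * N"
  unfolding swap_half_def by auto

lemma swap_half_swap_half [simp]: "i < 2 * N \<Longrightarrow> swap_half N (swap_half N i) = i"
  unfolding swap_half_def by auto

lemma swap_half_eq_iff: "i < 2 * N \<Longrightarrow> j < 2 * N \<Longrightarrow> swap_half N i = swap_half N j \<longleftrightarrow> i = j"
  by (metis swap_half_swap_half)

lemma swap_half_mod: "i < 2 * N \<Longrightarrow> swap_half N i mod N = i mod N"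
  unfolding swap_half_def by (auto simp: le_mod_geq)

lemma sum_swap_half: "(\<Sum>i = 0..<2 * N. f (swap_half N i)) = (\<Sum>i = 0..<2 * N. f i)"
  by (rule sum.reindex_bij_witness[of _ "swap_half N" "swap_half N"]) (auto simp: swap_half_less)

lemma index_GammaM:
  assumes "i < 2 * N" "j < 2 * N"
  shows "GammaM N $$ (i, j) = (if j = swap_half N i then 1 else 0)"
    and "GammaM N $$ (i, j) = (if i = swap_half N j then 1 else 0)"
  using assms by (auto simp: GammaM_def swap_half_def)

lemma dim_GammaM [simp]: "dim_row (GammaM N) = 2 * N" "dim_col (GammaM N) = 2 * N"
  unfolding GammaM_def by auto

lemma GammaM_carrier [simp]: "GammaM N \<in> carrier_mat (2 * N) (2 * N)"
  by (simp add: carrier_matI)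

lemma GammaM_mult:
  assumes X: "X \<in> carrier_mat (2 * N) nc"
  shows "GammaM N * X = mat (2 * N) nc (\<lambda>(i, j). X $$ (swap_half N i, j))"
proof (rule eq_matI)
  fix i j assume "i < dim_row (mat (2 * N) nc (\<lambda>(i, j). X $$ (swap_half N i, j)))"
    "j < dim_col (mat (2 * N) nc (\<lambda>(i, j). X $$ (swap_half N i, j)))"
  then have i: "i < 2 * N" and j: "j < nc" by auto
  have "(GammaM N * X) $$ (i, j) = (\<Sum>k = 0..<2 * N. (if k = swap_half N i then 1 else 0) * X $$ (k, j))"
    using X i j by (auto simp: scalar_prod_def index_GammaM(1) intro!: sum.cong)
  also have "\<dots> = (\<Sum>k = 0..<2 * N. if k = swap_half N i then X $$ (k, j) else 0)"
    by (rule sum.cong) auto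
  also have "\<dots> = X $$ (swap_half N i, j)"
    using swap_half_less[OF i] by simp
  finally show "(GammaM N * X) $$ (i, j) = mat (2 * N) nc (\<lambda>(i, j). X $$ (swap_half N i, j)) $$ (i, j)"
    using i j by simp
qed (use X in auto)

lemma mult_GammaM:
  assumes X: "X \<in> carrier_mat nr (2 * N)"
  shows "X * GammaM N = mat nr (2 * N) (\<lambda>(i, j). X $$ (i, swap_half N j))"
proof (rule eq_matI)
  fix i j assume "i < dim_row (mat nr (2 * N) (\<lambda>(i, j). X $$ (i, swap_half N j)))"
    "j < dim_col (mat nr (2 * N) (\<lambda>(i, j). X $$ (i, swap_half N j)))"
  then have i: "i < nr" and j: "j < 2 * N" by auto
  have "(X * GammaM N) $$ (i, j) = (\<Sum>k = 0..<2 * N. X $$ (i, k) * (if k = swap_half N j then 1 else 0))"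
    using X i j by (auto simp: scalar_prod_def index_GammaM(2) intro!: sum.cong)
  also have "\<dots> = (\<Sum>k = 0..<2 * N. if k = swap_half N j then X $$ (i, k) else 0)"
    by (rule sum.cong) auto
  also have "\<dots> = X $$ (i, swap_half N j)"
    using swap_half_less[OF j] by simp
  finally show "(X * GammaM N) $$ (i, j) = mat nr (2 * N) (\<lambda>(i, j). X $$ (i, swap_half N j)) $$ (i, j)"
    using i j by simp
qed (use X in auto)

lemma GammaM_cconj_GammaM:
  assumes X: "X \<in> carrier_mat (2 * N) (2 * N)"
  shows "GammaM N * cconj X * GammaM N = mat (2 * N) (2 * N) (\<lambda>(i, j). cnj (X $$ (swap_half N i, swap_half N j)))"
proof -
  have "GammaM N * cconj X = mat (2 * N) (2 * N) (\<lambda>(i, j). cnj (X $$ (swap_half N i, j)))"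
    using X by (subst GammaM_mult) (auto simp: cconj_def swap_half_less intro!: eq_matI)
  then show ?thesis
    by (subst mult_GammaM) (auto simp: swap_half_less intro!: eq_matI)
qed

lemma GammaM_mult_GammaM: "GammaM N * GammaM N = 1\<^sub>m (2 * N)"
  by (subst GammaM_mult) (auto simp: index_GammaM(1) swap_half_less intro!: eq_matI)

definition swap_conj :: "nat \<Rightarrow> complex vec \<Rightarrow> complex vec" where
  "swap_conj N x = vec (2 * N) (\<lambda>i. cnj (x $ swap_half N i))"

lemma dim_swap_conj [simp]: "dim_vec (swap_conj N x) = 2 * N"
  unfolding swap_conj_def by simp

lemma swap_conj_carrier [simp]: "swap_conj N x \<in> carrier_vec (2 * N)"
  unfolding swap_conj_def by simp

lemma index_swap_conj: "i < 2 * N \<Longrightarrow> swap_conj N x $ i = cnj (x $ swap_half N i)"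
  unfolding swap_conj_def by simp

lemma swap_conj_smult: "x \<in> carrier_vec (2 * N) \<Longrightarrow> swap_conj N (k \<cdot>\<^sub>v x) = cnj k \<cdot>\<^sub>v swap_conj N x"
  by (rule eq_vecI) (auto simp: swap_conj_def swap_half_less)

lemma swap_conj_inner:
  assumes "x \<in> carrier_vec (2 * N)" "y \<in> carrier_vec (2 * N)"
  shows "conjugate (swap_conj N x) \<bullet> swap_conj N y = cnj (conjugate x \<bullet> y)"
proof -
  have "conjugate (swap_conj N x) \<bullet> swap_conj N y = (\<Sum>i = 0..<2 * N. x $ swap_half N i * cnj (y $ swap_half N i))"
    unfolding scalar_prod_def using assms by (auto simp: index_swap_conj intro!: sum.cong)
  also have "\<dots> = cnj (conjugate x \<bullet> y)"
    unfolding sum_swap_half[of "\<lambda>i. x $ i * cnj (y $ i)"] scalar_prod_def using assms by simp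
  finally show ?thesis .
qed

lemma GammaM_cconj_GammaM_mult_swap_conj:
  assumes A: "A \<in> carrier_mat (2 * N) (2 * N)" and x: "x \<in> carrier_vec (2 * N)"
  shows "(GammaM N * cconj A * GammaM N) *\<^sub>v swap_conj N x = swap_conj N (A *\<^sub>v x)"
proof (rule eq_vecI)
  fix i assume "i < dim_vec (swap_conj N (A *\<^sub>v x))"
  then have i: "i < 2 * N" by simp
  have "((GammaM N * cconj A * GammaM N) *\<^sub>v swap_conj N x) $ i
      = (\<Sum>j = 0..<2 * N. cnj (A $$ (swap_half N i, swap_half N j)) * cnj (x $ swap_half N j))"
    using A x i by (auto simp: GammaM_cconj_GammaM scalar_prod_def index_swap_conj intro!: sum.cong)
  also have "\<dots> = (\<Sum>j = 0..<2 * N. cnj (A $$ (swap_half N i, j) * x $ j))"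
    using sum_swap_half[of "\<lambda>j. cnj (A $$ (swap_half N i, j) * x $ j)"] by simp
  also have "\<dots> = swap_conj N (A *\<^sub>v x) $ i"
    using A x i swap_half_less[OF i] by (simp add: index_swap_conj scalar_prod_def)
  finally show "((GammaM N * cconj A * GammaM N) *\<^sub>v swap_conj N x) $ i = swap_conj N (A *\<^sub>v x) $ i" .
qed simp

lemma sesq_form_swap_conj:
  assumes A: "A \<in> carrier_mat (2 * N) (2 * N)" and x: "x \<in> carrier_vec (2 * N)" and y: "y \<in> carrier_vec (2 * N)"
  shows "sesq_form (GammaM N * cconj A * GammaM N) (swap_conj N x) (swap_conj N y) = cnj (sesq_form A x y)"
  unfolding sesq_form_def GammaM_cconj_GammaM_mult_swap_conj[OF A y]
  using swap_conj_inner[OF x mult_mat_vec_carrier[OF A y]] .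

lemma swap_conj_eigenvector:
  assumes K: "K \<in> carrier_mat (2 * N) (2 * N)" and anti: "GammaM N * cconj K * GammaM N = - K"
    and x: "x \<in> carrier_vec (2 * N)" and eig: "K *\<^sub>v x = complex_of_real a \<cdot>\<^sub>v x"
  shows "K *\<^sub>v swap_conj N x = complex_of_real (- a) \<cdot>\<^sub>v swap_conj N x"
proof -
  have "- (K *\<^sub>v swap_conj N x) = swap_conj N (K *\<^sub>v x)"
    using GammaM_cconj_GammaM_mult_swap_conj[OF K x] K unfolding anti by simp
  also have "\<dots> = complex_of_real a \<cdot>\<^sub>v swap_conj N x" unfolding eig using x by (simp add: swap_conj_smult)
  finally have "K *\<^sub>v swap_conj N x = - (complex_of_real a \<cdot>\<^sub>v swap_conj N x)" by (metis uminus_uminus_vec)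
  also have "\<dots> = complex_of_real (- a) \<cdot>\<^sub>v swap_conj N x" by (intro eq_vecI) auto
  finally show ?thesis .
qed

lemma orthonormal_eigenvectors_swap_conj:
  assumes K: "K \<in> carrier_mat (2 * N) (2 * N)" and anti: "GammaM N * cconj K * GammaM N = - K"
    and yd: "orthonormal_eigenvectors K m y d"
  shows "orthonormal_eigenvectors K m (swap_conj N \<circ> y) (\<lambda>j. - d j)"
  using yd K swap_conj_eigenvector[OF K anti] unfolding orthonormal_eigenvectors_def
  by (auto simp: swap_conj_inner)

lemma positive_eigenvectors:
  assumes K: "K \<in> carrier_mat (2 * N) (2 * N)" and herm: "adj K = K" and inv: "invertible_mat K"
    and anti: "GammaM N * cconj K * GammaM N = - K"
  obtains z \<omega> where "orthonormal_eigenvectors K N z \<omega>" "\<And>k. k < N \<Longrightarrow> \<omega> k > 0"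
proof -
  obtain y d where yd: "orthonormal_eigenvectors K (2 * N) y d"
    using hermitian_orthonormal_eigenvectors[OF K herm] by blast
  have "\<exists>y d. orthonormal_eigenvectors K (2 * N) y d \<and> N \<le> card {j. j < 2 * N \<and> d j > 0}"
  proof (cases "N \<le> card {j. j < 2 * N \<and> d j > 0}")
    case True
    then show ?thesis using yd by (intro exI[of _ y] exI[of _ d]) simp
  next
    case False
    define P where "P = {j. j < 2 * N \<and> d j > 0}"
    define Q where "Q = {j. j < 2 * N \<and> - d j > 0}"
    have "{..<2 * N} \<subseteq> P \<union> Q"
    proof
      fix j assume "j \<in> {..<2 * N}"
      then have "j < 2 * N" by simp
      moreover have "d j \<noteq> 0" by (rule orthonormal_eigenvectors_nonzero_eigenvalue[OF K inv yd \<open>j < 2 * N\<close>])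
      ultimately show "j \<in> P \<union> Q" unfolding P_def Q_def by (auto simp: linorder_neq_iff)
    qed
    then have "2 * N \<le> card (P \<union> Q)"
      using card_mono[of "P \<union> Q" "{..<2 * N}"] unfolding P_def Q_def by simp
    also have "\<dots> \<le> card P + card Q" by (rule card_Un_le)
    finally have "N \<le> card Q" using False unfolding P_def by simp
    then show ?thesis using orthonormal_eigenvectors_swap_conj[OF K anti yd] unfolding Q_def
      by (intro exI[of _ "swap_conj N \<circ> y"] exI[of _ "\<lambda>j. - d j"]) simp
  qed
  then obtain y d where yd: "orthonormal_eigenvectors K (2 * N) y d"
    and card: "N \<le> card {j. j < 2 * N \<and> d j > 0}" by blast
  obtain S where S: "S \<subseteq> {j. j < 2 * N \<and> d j > 0}" "card S = N"
    using obtain_subset_with_card_n[OF card] by blast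
  have "finite S" using S(1) by (rule finite_subset) simp
  then obtain p where "bij_betw p {0..<card S} S" using ex_bij_betw_nat_finite by blast
  then have p: "inj_on p {..<N}" "p ` {..<N} \<subseteq> {j. j < 2 * N \<and> d j > 0}"
    using S by (auto simp: bij_betw_def atLeast0LessThan)
  show ?thesis
  proof (rule that)
    show "orthonormal_eigenvectors K N (y \<circ> p) (d \<circ> p)"
      using orthonormal_eigenvectors_reindex[OF yd p(1)] p(2) by auto
    show "(d \<circ> p) k > 0" if "k < N" for k using p(2) that by auto
  qed
qed

definition paired_mat :: "nat \<Rightarrow> (nat \<Rightarrow> complex vec) \<Rightarrow> complex mat" where
  "paired_mat N t = mat (2 * N) (2 * N)
     (\<lambda>(i, j). (if j < N then t j else swap_conj N (t (j - N))) $ i)"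

lemma dim_paired_mat [simp]: "dim_row (paired_mat N t) = 2 * N" "dim_col (paired_mat N t) = 2 * N"
  unfolding paired_mat_def by simp_all

lemma paired_mat_carrier [simp]: "paired_mat N t \<in> carrier_mat (2 * N) (2 * N)"
  unfolding paired_mat_def by simp

lemma col_paired_mat:
  assumes t: "\<And>k. k < N \<Longrightarrow> t k \<in> carrier_vec (2 * N)" and j: "j < 2 * N"
  shows "col (paired_mat N t) j = (if j < N then t j else swap_conj N (t (j - N)))"
proof -
  have "(if j < N then t j else swap_conj N (t (j - N))) \<in> carrier_vec (2 * N)" using t by simp
  then show ?thesis using j by (intro eq_vecI) (auto simp: paired_mat_def)
qed

lemma paired_mat_GammaM_symmetric:
  "GammaM N * cconj (paired_mat N t) * GammaM N = paired_mat N t"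
  by (rule eq_matI)
     (auto simp: GammaM_cconj_GammaM paired_mat_def swap_half_less index_swap_conj, auto simp: swap_half_def)

lemma paired_mat_congruence:
  assumes A: "A \<in> carrier_mat (2 * N) (2 * N)" and herm: "adj A = A"
    and sym: "complex_of_real s \<cdot>\<^sub>m (GammaM N * cconj A * GammaM N) = A"
    and t: "\<And>k. k < N \<Longrightarrow> t k \<in> carrier_vec (2 * N)"
    and diag: "\<And>k l. k < N \<Longrightarrow> l < N \<Longrightarrow>
      sesq_form A (t k) (t l) = (if k = l then complex_of_real (c k) else 0)"
    and cross: "\<And>k l. k < N \<Longrightarrow> l < N \<Longrightarrow> sesq_form A (t k) (swap_conj N (t l)) = 0"
  shows "adj (paired_mat N t) * A * paired_mat N t
    = mat_diag (2 * N) (\<lambda>i. complex_of_real (if i < N then c i else s * c (i - N)))"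
proof (rule eq_matI)
  fix i j assume "i < dim_row (mat_diag (2 * N) (\<lambda>i. complex_of_real (if i < N then c i else s * c (i - N))))"
    "j < dim_col (mat_diag (2 * N) (\<lambda>i. complex_of_real (if i < N then c i else s * c (i - N))))"
  then have i: "i < 2 * N" and j: "j < 2 * N" by (auto simp: mat_diag_def)
  have swap: "sesq_form A (swap_conj N x) (swap_conj N y) = complex_of_real s * cnj (sesq_form A x y)"
    if "x \<in> carrier_vec (2 * N)" "y \<in> carrier_vec (2 * N)" for x y
  proof -
    have "sesq_form A (swap_conj N x) (swap_conj N y)
        = complex_of_real s * sesq_form (GammaM N * cconj A * GammaM N) (swap_conj N x) (swap_conj N y)"
      using A by (subst (1) sym[symmetric], intro sesq_form_smult_mat) (auto simp: GammaM_cconj_GammaM)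
    then show ?thesis using sesq_form_swap_conj[OF A that] by simp
  qed
  have "(adj (paired_mat N t) * A * paired_mat N t) $$ (i, j)
      = sesq_form A (col (paired_mat N t) i) (col (paired_mat N t) j)"
    by (rule index_adj_mult_mult[OF paired_mat_carrier A i j])
  also have "\<dots> = mat_diag (2 * N) (\<lambda>i. complex_of_real (if i < N then c i else s * c (i - N))) $$ (i, j)"
  proof (cases "i < N"; cases "j < N")
    assume "i < N" "j < N"
    then show ?thesis using diag i j t by (simp add: col_paired_mat[OF t] mat_diag_def)
  next
    assume "i < N" "\<not> j < N"
    then show ?thesis using cross[of i "j - N"] i j t by (simp add: col_paired_mat[OF t] mat_diag_def)
  next
    assume a: "\<not> i < N" "j < N"
    have "sesq_form A (swap_conj N (t (i - N))) (t j) = cnj (sesq_form A (t j) (swap_conj N (t (i - N))))"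
      using a i t by (intro sesq_form_hermitian[OF A herm]) auto
    then show ?thesis using cross[of j "i - N"] a i j by (simp add: col_paired_mat[OF t] mat_diag_def)
  next
    assume a: "\<not> i < N" "\<not> j < N"
    then have "i - N = j - N \<longleftrightarrow> i = j" by auto
    then show ?thesis using a i j t swap diag[of "i - N" "j - N"] by (simp add: col_paired_mat[OF t] mat_diag_def)
  qed
  finally show "(adj (paired_mat N t) * A * paired_mat N t) $$ (i, j)
      = mat_diag (2 * N) (\<lambda>i. complex_of_real (if i < N then c i else s * c (i - N))) $$ (i, j)" .
qed (auto simp: mat_diag_def)

definition mode_diag :: "nat \<Rightarrow> (nat \<Rightarrow> real) \<Rightarrow> complex mat" where
  "mode_diag N \<mu> = mat_diag (2 * N) (\<lambda>i. complex_of_real (if i < N then \<mu> i else \<mu> (i - N)))"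

lemma dim_mode_diag [simp]: "dim_row (mode_diag N \<mu>) = 2 * N" "dim_col (mode_diag N \<mu>) = 2 * N"
  unfolding mode_diag_def mat_diag_def by simp_all

lemma mode_diag_carrier [simp]: "mode_diag N \<mu> \<in> carrier_mat (2 * N) (2 * N)"
  unfolding mode_diag_def by simp

lemma mode_diag_mult: "mode_diag N f * mode_diag N g = mode_diag N (\<lambda>k. f k * g k)"
  unfolding mode_diag_def mat_diag_diag by (rule arg_cong[where f = "mat_diag _"]) auto

lemma mode_diag_one: "(\<And>k. k < N \<Longrightarrow> f k = 1) \<Longrightarrow> mode_diag N f = 1\<^sub>m (2 * N)"
  by (rule eq_matI) (auto simp: mode_diag_def mat_diag_def)

lemma adj_mode_diag: "adj (mode_diag N f) = mode_diag N f"
  by (rule eq_matI) (auto simp: mode_diag_def mat_diag_def)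

lemma GammaM_cconj_mode_diag: "GammaM N * cconj (mode_diag N f) * GammaM N = mode_diag N f"
  by (rule eq_matI) (auto simp: GammaM_cconj_GammaM mode_diag_def mat_diag_def swap_half_def)

lemma SigmaM_eq_mat_diag: "SigmaM N = mat_diag (2 * N) (\<lambda>i. if i < N then 1 else -1)"
  by (rule eq_matI) (auto simp: SigmaM_def mat_diag_def)

lemma SigmaM_carrier [simp]: "SigmaM N \<in> carrier_mat (2 * N) (2 * N)"
  unfolding SigmaM_eq_mat_diag by simp

lemma SigmaM_mult_SigmaM: "SigmaM N * SigmaM N = 1\<^sub>m (2 * N)"
  unfolding SigmaM_eq_mat_diag mat_diag_diag
  by (subst mat_diag_one[symmetric], rule arg_cong[where f = "mat_diag _"]) auto

lemma SigmaM_mult_mode_diag: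
  "SigmaM N * mode_diag N \<mu> = mat_diag (2 * N) (\<lambda>i. complex_of_real (if i < N then \<mu> i else - \<mu> (i - N)))"
  unfolding SigmaM_eq_mat_diag mode_diag_def mat_diag_diag by (rule arg_cong[where f = "mat_diag _"]) auto

lemma simultaneous_diagonalization_unit:
  assumes K: "K \<in> carrier_mat (2 * N) (2 * N)" and herm: "adj K = K" and inv: "invertible_mat K"
    and anti: "GammaM N * cconj K * GammaM N = - K"
  obtains T \<mu> where "T \<in> carrier_mat (2 * N) (2 * N)" "adj T * K * T = SigmaM N"
    "T = GammaM N * cconj T * GammaM N" "\<And>k. k < N \<Longrightarrow> \<mu> k > 0" "adj T * T = mode_diag N \<mu>"
proof -
  obtain z \<omega> where z\<omega>: "orthonormal_eigenvectors K N z \<omega>" and pos: "\<And>k. k < N \<Longrightarrow> \<omega> k > 0"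
    using positive_eigenvectors[OF K herm inv anti] by blast
  define t where "t k = complex_of_real (1 / sqrt (\<omega> k)) \<cdot>\<^sub>v z k" for k
  have t: "t k \<in> carrier_vec (2 * N)" "K *\<^sub>v t k = complex_of_real (\<omega> k) \<cdot>\<^sub>v t k" if "k < N" for k
    using z\<omega> K that unfolding t_def orthonormal_eigenvectors_def
    by (auto simp: mult_mat_vec smult_smult_assoc mult.commute)
  have inner: "conjugate (t k) \<bullet> t l = (if k = l then complex_of_real (1 / \<omega> k) else 0)"
    if "k < N" "l < N" for k l
  proof -
    have z: "z k \<in> carrier_vec (2 * N)" "z l \<in> carrier_vec (2 * N)"
      "conjugate (z k) \<bullet> z l = (if k = l then 1 else 0)"
      using z\<omega> K that unfolding orthonormal_eigenvectors_def by auto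
    have "sqrt (\<omega> k) * sqrt (\<omega> k) = \<omega> k" using pos[OF that(1)] by simp
    then have sq: "complex_of_real (sqrt (\<omega> k)) * complex_of_real (sqrt (\<omega> k)) = complex_of_real (\<omega> k)"
      by (metis of_real_mult)
    show ?thesis
    proof (cases "k = l")
      case True
      then have [simp]: "l = k" by simp
      show ?thesis using z sq unfolding t_def by (simp add: conjugate_smult_vec)
    next
      case False
      then show ?thesis using z unfolding t_def by (simp add: conjugate_smult_vec)
    qed
  qed
  have cross: "conjugate (t k) \<bullet> swap_conj N (t l) = 0" if "k < N" "l < N" for k l
    using pos[of k] pos[of l] that
    by (intro hermitian_eigenvectors_orthogonal[OF K herm t(1,2)[OF that(1)] swap_conj_carrier
        swap_conj_eigenvector[OF K anti t(1,2)[OF that(2)]]]) auto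
  define T where "T = paired_mat N t"
  have "adj T * K * T = mat_diag (2 * N) (\<lambda>i. complex_of_real (if i < N then 1 else - 1 * 1))"
    unfolding T_def
  proof (rule paired_mat_congruence[OF K herm _ t(1)])
    show "complex_of_real (- 1) \<cdot>\<^sub>m (GammaM N * cconj K * GammaM N) = K"
      unfolding anti using K by (intro eq_matI) auto
    show "sesq_form K (t k) (t l) = (if k = l then complex_of_real 1 else 0)" if "k < N" "l < N" for k l
    proof -
      have "sesq_form K (t k) (t l) = complex_of_real (\<omega> l) * (conjugate (t k) \<bullet> t l)"
        unfolding sesq_form_def t(2)[OF that(2)] using t(1)[OF that(1)] t(1)[OF that(2)] by simp
      then show ?thesis
        using inner[OF that] pos[OF that(1)] by (cases "k = l") (simp_all flip: of_real_mult)
    qed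
    show "sesq_form K (t k) (swap_conj N (t l)) = 0" if "k < N" "l < N" for k l
      unfolding sesq_form_def swap_conj_eigenvector[OF K anti t(1,2)[OF that(2)]]
      using cross[OF that] t(1)[OF that(1)] by simp
  qed
  also have "\<dots> = SigmaM N"
    unfolding SigmaM_eq_mat_diag by (rule arg_cong[where f = "mat_diag _"]) auto
  finally have TKT: "adj T * K * T = SigmaM N" .
  have "adj T * 1\<^sub>m (2 * N) * T = mat_diag (2 * N) (\<lambda>i. complex_of_real (if i < N then 1 / \<omega> i else 1 * (1 / \<omega> (i - N))))"
    unfolding T_def
  proof (rule paired_mat_congruence[OF one_carrier_mat adj_one_mat _ t(1)])
    have "cconj (1\<^sub>m (2 * N)) = 1\<^sub>m (2 * N)" by (rule eq_matI) (auto simp: cconj_def)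
    then show "complex_of_real 1 \<cdot>\<^sub>m (GammaM N * cconj (1\<^sub>m (2 * N)) * GammaM N) = 1\<^sub>m (2 * N)"
      by (simp add: GammaM_mult_GammaM, intro eq_matI, auto)
    show "sesq_form (1\<^sub>m (2 * N)) (t k) (t l) = (if k = l then complex_of_real (1 / \<omega> k) else 0)"
      if "k < N" "l < N" for k l
      using inner[OF that] t that by (simp add: sesq_form_one_mat)
    show "sesq_form (1\<^sub>m (2 * N)) (t k) (swap_conj N (t l)) = 0" if "k < N" "l < N" for k l
      using cross[OF that] t that by (simp add: sesq_form_one_mat)
  qed
  then have TT: "adj T * T = mode_diag N (\<lambda>k. 1 / \<omega> k)"
    unfolding mode_diag_def T_def by (simp cong: if_cong)
  have T\<Gamma>: "T = GammaM N * cconj T * GammaM N"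
    unfolding T_def by (rule paired_mat_GammaM_symmetric[symmetric])
  have T: "T \<in> carrier_mat (2 * N) (2 * N)" unfolding T_def by simp
  have "1 / \<omega> k > 0" if "k < N" for k using pos[OF that] by simp
  from that[OF T TKT T\<Gamma> this TT] show ?thesis .
qed

lemma GammaM_cconj_mult:
  assumes A: "A \<in> carrier_mat (2 * N) (2 * N)" and B: "B \<in> carrier_mat (2 * N) (2 * N)"
  shows "GammaM N * cconj (A * B) * GammaM N
    = (GammaM N * cconj A * GammaM N) * (GammaM N * cconj B * GammaM N)"
proof (rule eq_matI)
  fix i j assume "i < dim_row ((GammaM N * cconj A * GammaM N) * (GammaM N * cconj B * GammaM N))"
    "j < dim_col ((GammaM N * cconj A * GammaM N) * (GammaM N * cconj B * GammaM N))"
  then have i: "i < 2 * N" and j: "j < 2 * N" using A B by (auto simp: GammaM_cconj_GammaM)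
  have "((GammaM N * cconj A * GammaM N) * (GammaM N * cconj B * GammaM N)) $$ (i, j)
      = (\<Sum>k = 0..<2 * N. cnj (A $$ (swap_half N i, swap_half N k)) * cnj (B $$ (swap_half N k, swap_half N j)))"
    using A B i j by (simp add: GammaM_cconj_GammaM scalar_prod_def)
  also have "\<dots> = (\<Sum>k = 0..<2 * N. cnj (A $$ (swap_half N i, k)) * cnj (B $$ (k, swap_half N j)))"
    by (rule sum_swap_half)
  also have "\<dots> = (GammaM N * cconj (A * B) * GammaM N) $$ (i, j)"
    using A B i j swap_half_less[OF i] swap_half_less[OF j]
    by (simp add: GammaM_cconj_GammaM scalar_prod_def cnj_sum)
  finally show "(GammaM N * cconj (A * B) * GammaM N) $$ (i, j)
      = ((GammaM N * cconj A * GammaM N) * (GammaM N * cconj B * GammaM N)) $$ (i, j)" ..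
qed (use A B in \<open>auto simp: GammaM_cconj_GammaM\<close>)

theorem simultaneous_diagonalization:
  assumes R: "R \<in> carrier_mat (2 * N) (2 * N)" and herm: "adj R = R" and inv: "invertible_mat R"
    and anti: "GammaM N * cconj R * GammaM N = - R" and a: "\<And>k. k < N \<Longrightarrow> a k > 0"
  obtains T \<mu> where "T \<in> carrier_mat (2 * N) (2 * N)" "adj T * R * T = SigmaM N"
    "T = GammaM N * cconj T * GammaM N" "\<And>k. k < N \<Longrightarrow> \<mu> k > 0"
    "adj T * mode_diag N a * T = mode_diag N \<mu>"
proof -
  define W where "W = mode_diag N (\<lambda>k. 1 / sqrt (a k))"
  have W: "W \<in> carrier_mat (2 * N) (2 * N)" "adj W = W" "GammaM N * cconj W * GammaM N = W"
    unfolding W_def by (simp_all add: adj_mode_diag GammaM_cconj_mode_diag)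
  have WaW: "W * mode_diag N a * W = 1\<^sub>m (2 * N)"
  proof -
    have "1 / sqrt (a k) * a k * (1 / sqrt (a k)) = 1" if "k < N" for k
      using a[OF that] real_sqrt_mult_self[of "a k"] by (simp add: field_simps)
    then show ?thesis unfolding W_def mode_diag_mult by (intro mode_diag_one) simp
  qed
  have "invertible_mat W"
  proof -
    have inv_sqrt: "1 / sqrt (a k) * sqrt (a k) = 1" "sqrt (a k) * (1 / sqrt (a k)) = 1" if "k < N" for k
      using a[OF that] by simp_all
    have "W * mode_diag N (\<lambda>k. sqrt (a k)) = 1\<^sub>m (2 * N)"
      unfolding W_def mode_diag_mult by (rule mode_diag_one) (erule inv_sqrt(1))
    moreover have "mode_diag N (\<lambda>k. sqrt (a k)) * W = 1\<^sub>m (2 * N)"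
      unfolding W_def mode_diag_mult by (rule mode_diag_one) (erule inv_sqrt(2))
    ultimately
    show ?thesis unfolding invertible_mat_def inverts_mat_def using W(1)
      by (intro conjI exI[of _ "mode_diag N (\<lambda>k. sqrt (a k))"]) auto
  qed
  define K where "K = W * R * W"
  have K: "K \<in> carrier_mat (2 * N) (2 * N)" unfolding K_def using W R by simp
  have "adj K = K" unfolding K_def using W R herm by (simp add: adj_mult[of _ "2 * N" "2 * N" _ "2 * N"])
  moreover have "invertible_mat K"
    unfolding K_def using W R inv \<open>invertible_mat W\<close> by (intro invertible_mat_mult) auto
  moreover have "GammaM N * cconj K * GammaM N = - K"
    unfolding K_def using W R anti by (simp add: GammaM_cconj_mult)
  ultimately show ?thesis
  proof (rule simultaneous_diagonalization_unit[OF K])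
    fix T0 \<mu> assume T0: "T0 \<in> carrier_mat (2 * N) (2 * N)" "adj T0 * K * T0 = SigmaM N"
      "T0 = GammaM N * cconj T0 * GammaM N"
      and \<mu>: "\<And>k. k < N \<Longrightarrow> \<mu> k > 0" "adj T0 * T0 = mode_diag N \<mu>"
    have carrier: "W * T0 \<in> carrier_mat (2 * N) (2 * N)" using W(1) T0(1) by simp
    have congruence_R: "adj (W * T0) * R * (W * T0) = SigmaM N"
      using adj_mult_congruence[OF W(1) T0(1) R] T0(2) W(2) unfolding K_def by simp
    have symmetric: "W * T0 = GammaM N * cconj (W * T0) * GammaM N"
      using GammaM_cconj_mult[OF W(1) T0(1)] W(3) T0(3) by simp
    have congruence_\<Omega>: "adj (W * T0) * mode_diag N a * (W * T0) = mode_diag N \<mu>"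
      using adj_mult_congruence[OF W(1) T0(1) mode_diag_carrier] W(2) WaW \<mu>(2) T0(1) by simp
    from that[OF carrier congruence_R symmetric \<mu>(1) congruence_\<Omega>] show ?thesis .
  qed
qed

lemma quadratic_form_unit_vec:
  fixes A :: "'a :: comm_ring_1 mat"
  assumes "A \<in> carrier_mat n n" "k < n"
  shows "unit_vec n k \<bullet> (A *\<^sub>v unit_vec n k) = A $$ (k, k)"
proof -
  have "unit_vec n k \<bullet> (A *\<^sub>v unit_vec n k) = (A *\<^sub>v unit_vec n k) $ k"
    by (rule scalar_prod_left_unit) (use assms in auto)
  also have "\<dots> = A $$ (k, k)" using assms by simp
  finally show ?thesis .
qed

lemma sesq_form_of_real:
  fixes A :: "real mat"
  assumes "A \<in> carrier_mat n n" "x \<in> carrier_vec n"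
  shows "sesq_form (map_mat complex_of_real A) (map_vec complex_of_real x) (map_vec complex_of_real x)
    = complex_of_real (x \<bullet> (A *\<^sub>v x))"
  unfolding sesq_form_def using assms
  by (simp add: scalar_prod_def conjugate_vec_def sum_distrib_left)

lemma mult_inv_mat_cancel:
  assumes R: "R \<in> carrier_mat n n" "invertible_mat R"
    and T: "T \<in> carrier_mat n n" and S: "S \<in> carrier_mat n n" and Om: "Om \<in> carrier_mat n n"
  shows "S * adj T * R * (inv_mat n R * Om) * T = S * (adj T * Om * T)"
proof -
  note Ri = inv_mat_inverse[OF R]
  have "R * (inv_mat n R * (Om * T)) = (R * inv_mat n R) * (Om * T)"
    by (rule assoc_mult_mat[symmetric]) (use R Ri T Om in auto)
  then have "R * (inv_mat n R * (Om * T)) = Om * T" using Ri Om T by simp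
  then show ?thesis
    using R Ri T S Om by (simp add: assoc_mult_mat[of _ n n _ n _ n] mult_carrier_mat[of _ n n])
qed

lemma SigmaM_mult_cancel:
  assumes "X \<in> carrier_mat (2 * N) (2 * N)" "Y \<in> carrier_mat (2 * N) (2 * N)" "SigmaM N * X = SigmaM N * Y"
  shows "X = Y"
proof -
  have "X = (SigmaM N * SigmaM N) * X" using assms(1) by (simp add: SigmaM_mult_SigmaM)
  also have "\<dots> = SigmaM N * (SigmaM N * Y)"
    using assms by (subst assoc_mult_mat[of _ "2 * N" "2 * N" _ "2 * N" _ "2 * N"]) auto
  also have "\<dots> = (SigmaM N * SigmaM N) * Y"
    using assms by (subst assoc_mult_mat[of _ "2 * N" "2 * N" _ "2 * N" _ "2 * N"]) auto
  also have "\<dots> = Y" using assms(2) by (simp add: SigmaM_mult_SigmaM)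
  finally show ?thesis .
qed

lemma normal_mode_condition_iff:
  assumes R: "R \<in> carrier_mat (2 * N) (2 * N)" "invertible_mat R"
    and T: "T \<in> carrier_mat (2 * N) (2 * N)" and Om: "Om \<in> carrier_mat (2 * N) (2 * N)"
  shows "SigmaM N * adj T * R * (inv_mat (2 * N) R * Om) * T = SigmaM N * mode_diag N \<mu>
    \<longleftrightarrow> adj T * Om * T = mode_diag N \<mu>"
proof -
  have "SigmaM N * adj T * R * (inv_mat (2 * N) R * Om) * T = SigmaM N * (adj T * Om * T)"
    by (rule mult_inv_mat_cancel[OF R T SigmaM_carrier Om])
  moreover have "adj T * Om * T \<in> carrier_mat (2 * N) (2 * N)" using T Om by simp
  ultimately show ?thesis using SigmaM_mult_cancel[of "adj T * Om * T" N "mode_diag N \<mu>"] by auto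
qed

lemma pseudo_unitary_left_inverse:
  assumes R: "R \<in> carrier_mat (2 * N) (2 * N)" and T: "T \<in> carrier_mat (2 * N) (2 * N)"
    and TRT: "adj T * R * T = SigmaM N"
  shows "(SigmaM N * adj T * R) * T = 1\<^sub>m (2 * N)"
proof -
  have "(SigmaM N * adj T * R) * T = SigmaM N * (adj T * R * T)"
    using R T by (simp add: assoc_mult_mat[of _ "2 * N" "2 * N" _ "2 * N" _ "2 * N"])
  then show ?thesis unfolding TRT SigmaM_mult_SigmaM .
qed

lemma four_block_same_carrier_mat:
  "A \<in> carrier_mat N N \<Longrightarrow> four_block_mat A A A A \<in> carrier_mat (2 * N) (2 * N)"
  using four_block_carrier_mat[of A N N A N N] by (simp add: mult_2)

lemma index_four_block_same_mat:
  "A \<in> carrier_mat N N \<Longrightarrow> i < 2 * N \<Longrightarrow> j < 2 * N \<Longrightarrow>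
    four_block_mat A A A A $$ (i, j) = A $$ (i mod N, j mod N)"
  by (auto simp: le_mod_geq)

lemma adj_SigmaM: "adj (SigmaM N) = SigmaM N"
  by (rule eq_matI) (auto simp: SigmaM_eq_mat_diag mat_diag_def)

context
  fixes N M :: nat and v L Ls :: real and c :: "nat \<Rightarrow> real"
begin

lemma dim_sigmaM [simp]: "dim_row (sigmaM N v L Ls M c) = N" "dim_col (sigmaM N v L Ls M c) = N"
  unfolding sigmaM_def by simp_all

lemma sigmaM_carrier [simp]: "sigmaM N v L Ls M c \<in> carrier_mat N N"
  by (simp add: carrier_matI)

lemma sigmaM_skew:
  assumes "i < N" "j < N"
  shows "sigmaM N v L Ls M c $$ (j, i) = - sigmaM N v L Ls M c $$ (i, j)"
    and "cnj (sigmaM N v L Ls M c $$ (i, j)) = - sigmaM N v L Ls M c $$ (i, j)"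
proof -
  define X where "X n m = 2 * v * sqrt (real (n * m)) * (1 - (-1) ^ (n + m))
    / (pi * sqrt (uu v L Ls M c n * uu v L Ls M c m) * (real m ^ 2 - real n ^ 2))" for n m
  have entry: "sigmaM N v L Ls M c $$ (a, b) = (if a = b then 0 else \<i> * complex_of_real (X (a + 1) (b + 1)))"
    if "a < N" "b < N" for a b
    using that unfolding sigmaM_def X_def by (simp add: Let_def)
  have X: "X m n = - X n m" for n m
    unfolding X_def
    by (simp only: mult.commute[of m n] add.commute[of m n] mult.commute[of "uu v L Ls M c m"]
        minus_diff_eq[of "real m ^ 2" "real n ^ 2", symmetric] mult_minus_right divide_minus_right)
  show "sigmaM N v L Ls M c $$ (j, i) = - sigmaM N v L Ls M c $$ (i, j)" using entry[OF assms] entry[OF assms(2,1)] X[of "i + 1" "j + 1"] by auto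
  show "cnj (sigmaM N v L Ls M c $$ (i, j)) = - sigmaM N v L Ls M c $$ (i, j)" using entry[OF assms] by auto
qed

lemma adj_sigmaM: "adj (sigmaM N v L Ls M c) = sigmaM N v L Ls M c"
proof (rule eq_matI)
  fix i j assume "i < dim_row (sigmaM N v L Ls M c)" "j < dim_col (sigmaM N v L Ls M c)"
  then show "adj (sigmaM N v L Ls M c) $$ (i, j) = sigmaM N v L Ls M c $$ (i, j)"
    using sigmaM_skew[of j i] by simp
qed simp_all

lemma RM_carrier [simp]: "RM N v L Ls M c \<in> carrier_mat (2 * N) (2 * N)"
  unfolding RM_def by (rule minus_carrier_mat[OF four_block_same_carrier_mat[OF sigmaM_carrier]])

lemma adj_RM: "adj (RM N v L Ls M c) = RM N v L Ls M c"
proof -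
  let ?B = "four_block_mat (sigmaM N v L Ls M c) (sigmaM N v L Ls M c) (sigmaM N v L Ls M c) (sigmaM N v L Ls M c)"
  have "adj ?B = ?B"
    by (simp add: adj_four_block_mat[of _ N N _ N _ N] adj_sigmaM)
  then show ?thesis
    unfolding RM_def using four_block_same_carrier_mat[OF sigmaM_carrier]
    by (simp add: adj_minus[of _ "2 * N" "2 * N"] adj_SigmaM)
qed

lemma GammaM_cconj_RM: "GammaM N * cconj (RM N v L Ls M c) * GammaM N = - RM N v L Ls M c"
proof -
  define B where "B = four_block_mat (sigmaM N v L Ls M c) (sigmaM N v L Ls M c)
    (sigmaM N v L Ls M c) (sigmaM N v L Ls M c)"
  have B: "B \<in> carrier_mat (2 * N) (2 * N)"
    unfolding B_def by (rule four_block_same_carrier_mat[OF sigmaM_carrier])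
  have R: "RM N v L Ls M c = SigmaM N - B" unfolding RM_def B_def ..
  have entry: "cnj (RM N v L Ls M c $$ (swap_half N i, swap_half N j)) = - RM N v L Ls M c $$ (i, j)"
    if i: "i < 2 * N" and j: "j < 2 * N" for i j
  proof -
    have N: "0 < N" using i by linarith
    note swap = swap_half_less[OF i] swap_half_less[OF j]
    have "B $$ (swap_half N i, swap_half N j) = B $$ (i, j)"
      unfolding B_def using i j swap by (simp only: index_four_block_same_mat[OF sigmaM_carrier] swap_half_mod)
    moreover have "cnj (B $$ (i, j)) = - B $$ (i, j)"
      unfolding B_def using i j N
      by (simp only: index_four_block_same_mat[OF sigmaM_carrier]) (rule sigmaM_skew(2); simp)
    moreover have "cnj (SigmaM N $$ (i, j)) = SigmaM N $$ (i, j)"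
      using i j unfolding SigmaM_eq_mat_diag by (simp add: mat_diag_def)
    moreover have "SigmaM N $$ (swap_half N i, swap_half N j) = - SigmaM N $$ (i, j)"
      using i j swap swap_half_eq_iff[OF i j]
      unfolding SigmaM_eq_mat_diag by (auto simp: mat_diag_def swap_half_def)
    ultimately show ?thesis unfolding R using i j swap carrier_matD[OF B] by simp
  qed
  show ?thesis
    by (rule eq_matI) (simp_all add: GammaM_cconj_GammaM entry carrier_matD[OF RM_carrier])
qed

lemma OmegaM_carrier [simp]: "OmegaM N v L Ls M c \<in> carrier_mat (2 * N) (2 * N)"
  unfolding OmegaM_def rhoM_def xiM_def by (simp add: mult_2)

lemma transpose_OmegaM: "transpose_mat (OmegaM N v L Ls M c) = OmegaM N v L Ls M c"
  by (rule eq_matI) (auto simp: OmegaM_def rhoM_def xiM_def)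

lemma uu_pos:
  assumes L: "L > 0" and n: "1 \<le> n" and discr: "(dispF Ls M c (wavenum L n))\<^sup>2 \<noteq> v\<^sup>2 * (wavenum L n)\<^sup>2"
  shows "uu v L Ls M c n > 0"
proof -
  have "wavenum L n > 0" unfolding wavenum_def using L n by simp
  moreover have "discr v L Ls M c n \<noteq> 0" using discr unfolding discr_def by simp
  ultimately show ?thesis unfolding uu_def by simp
qed

lemma pos_def_OmegaM_epsn:
  assumes pd: "pos_def_mat (2 * N) (OmegaM N v L Ls M c)"
  shows "\<forall>k<N. epsn v L Ls M c (k + 1) = 1"
proof (intro allI impI)
  fix k assume k: "k < N"
  have "0 < unit_vec (2 * N) k \<bullet> (OmegaM N v L Ls M c *\<^sub>v unit_vec (2 * N) k)"
    using pd k unfolding pos_def_mat_def by simp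
  also have "\<dots> = OmegaM N v L Ls M c $$ (k, k)" using k by (intro quadratic_form_unit_vec) auto
  also have "\<dots> = real (k + 1) * uu v L Ls M c (k + 1) * epsn v L Ls M c (k + 1)"
    using k by (simp add: OmegaM_def rhoM_def xiM_def)
  finally show "epsn v L Ls M c (k + 1) = 1" unfolding epsn_def by (auto split: if_splits)
qed

lemma OmegaM_eq_mode_diag:
  assumes "\<forall>k<N. epsn v L Ls M c (k + 1) = 1"
  shows "map_mat complex_of_real (OmegaM N v L Ls M c) = mode_diag N (\<lambda>k. real (k + 1) * uu v L Ls M c (k + 1))"
proof -
  have eps: "epsn v L Ls M c (Suc k) = 1" if "k < N" for k using assms that by simp
  show ?thesis by (rule eq_matI) (auto simp: OmegaM_def rhoM_def xiM_def mode_diag_def mat_diag_def eps)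
qed

end

theorem lemma6:
  fixes N M :: nat and v L Ls :: real and c :: "nat \<Rightarrow> real"
  assumes "N \<ge> 1" and "\<bar>v\<bar> < 1" and "L > 0" and "Ls \<ge> 0" and "M \<ge> 1" and "c 1 = 1"
    and "\<forall>n\<in>{1..N}. (dispF Ls M c (wavenum L n))^2 \<noteq> v^2 * (wavenum L n)^2"
    and "invertible_mat (RM N v L Ls M c)"
  shows "(\<exists>T. normal_mode_transformation N v L Ls M c T) \<longleftrightarrow>
         pos_def_mat (2*N) (OmegaM N v L Ls M c)"
proof
  let ?R = "RM N v L Ls M c" and ?\<Omega> = "OmegaM N v L Ls M c"
  let ?\<Omega>c = "map_mat complex_of_real ?\<Omega>"
  assume "\<exists>T. normal_mode_transformation N v L Ls M c T"
  then obtain T where "normal_mode_transformation N v L Ls M c T" ..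
  note nmt = this[unfolded normal_mode_transformation_def Let_def DM_def]
  have T: "T \<in> carrier_mat (2 * N) (2 * N)" using nmt by (rule conjunct1)
  have TRT: "adj T * ?R * T = SigmaM N" using nmt[THEN conjunct2] by (rule conjunct1)
  from nmt[THEN conjunct2, THEN conjunct2, THEN conjunct2] obtain \<mu> where \<mu>_eigen:
    "(\<forall>i<N. \<mu> i > 0) \<and> SigmaM N * adj T * ?R * (inv_mat (2 * N) ?R * ?\<Omega>c) * T
      = mat_diag (2 * N) (\<lambda>i. complex_of_real (if i < N then \<mu> i else - \<mu> (i - N)))" ..
  have \<mu>: "\<forall>i<N. \<mu> i > 0" using \<mu>_eigen by (rule conjunct1)
  have "SigmaM N * adj T * ?R * (inv_mat (2 * N) ?R * ?\<Omega>c) * T = SigmaM N * mode_diag N \<mu>"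
    unfolding SigmaM_mult_mode_diag[of N \<mu>] using \<mu>_eigen by (rule conjunct2)
  then have "adj T * ?\<Omega>c * T = mode_diag N \<mu>"
    unfolding normal_mode_condition_iff[OF RM_carrier assms(8) T map_carrier_mat[THEN iffD2, OF OmegaM_carrier]] .
  moreover have "(SigmaM N * adj T * ?R) * T = 1\<^sub>m (2 * N)"
    by (rule pseudo_unitary_left_inverse[OF RM_carrier T TRT])
  ultimately have pos: "Re (sesq_form ?\<Omega>c x x) > 0" if "x \<in> carrier_vec (2 * N)" "x \<noteq> 0\<^sub>v (2 * N)" for x
    using T \<mu> that unfolding mode_diag_def
    by (intro sesq_form_pos_if_congruent_pos_diag[where Ti = "SigmaM N * adj T * ?R"]) auto
  show "pos_def_mat (2 * N) ?\<Omega>"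
    unfolding pos_def_mat_def
  proof (intro conjI ballI impI)
    fix x :: "real vec" assume x: "x \<in> carrier_vec (2 * N)" "x \<noteq> 0\<^sub>v (2 * N)"
    then have "map_vec complex_of_real x \<noteq> 0\<^sub>v (2 * N)" by (auto simp: vec_eq_iff)
    then show "x \<bullet> (?\<Omega> *\<^sub>v x) > 0"
      using pos[of "map_vec complex_of_real x"] x sesq_form_of_real[OF OmegaM_carrier x(1)] by simp
  qed (simp_all add: transpose_OmegaM)
next
  assume pd: "pos_def_mat (2 * N) (OmegaM N v L Ls M c)"
  have a: "real (k + 1) * uu v L Ls M c (k + 1) > 0" if "k < N" for k
  proof -
    have "(dispF Ls M c (wavenum L (k + 1)))\<^sup>2 \<noteq> v\<^sup>2 * (wavenum L (k + 1))\<^sup>2"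
      by (rule bspec[OF assms(7)]) (use that in simp)
    from uu_pos[OF assms(3) _ this] show ?thesis by simp
  qed
  show "\<exists>T. normal_mode_transformation N v L Ls M c T"
  proof (rule simultaneous_diagonalization[OF RM_carrier adj_RM assms(8) GammaM_cconj_RM,
        where a = "\<lambda>k. real (k + 1) * uu v L Ls M c (k + 1)", OF a])
    fix T \<mu> assume T: "T \<in> carrier_mat (2 * N) (2 * N)" "adj T * RM N v L Ls M c * T = SigmaM N"
      "T = GammaM N * cconj T * GammaM N" and \<mu>: "\<And>k. k < N \<Longrightarrow> \<mu> k > 0"
      "adj T * mode_diag N (\<lambda>k. real (k + 1) * uu v L Ls M c (k + 1)) * T = mode_diag N \<mu>"
    have "adj T * map_mat complex_of_real (OmegaM N v L Ls M c) * T = mode_diag N \<mu>"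
      unfolding OmegaM_eq_mode_diag[OF pos_def_OmegaM_epsn[OF pd]] by (rule \<mu>(2))
    then have "SigmaM N * adj T * RM N v L Ls M c * DM N v L Ls M c * T
        = mat_diag (2 * N) (\<lambda>i. complex_of_real (if i < N then \<mu> i else - \<mu> (i - N)))"
      unfolding DM_def SigmaM_mult_mode_diag[of N \<mu>, symmetric]
        normal_mode_condition_iff[OF RM_carrier assms(8) T(1) map_carrier_mat[THEN iffD2, OF OmegaM_carrier]] .
    moreover have "\<forall>k<N. \<mu> k > 0" using \<mu>(1) by blast
    ultimately show "\<exists>T. normal_mode_transformation N v L Ls M c T"
      unfolding normal_mode_transformation_def Let_def using T
      by (intro exI[of _ T] conjI exI[of _ \<mu>]) assumption+
  qed
qed

end
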